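(* For every integer $n\ge4$, $\gamma_{(1,1,0)}^s(P_n)=2\lceil n/3\rceil$.
   Context: $P_n$ is the path on $n$ vertices; $N(v)$ is the open neighbourhood. For a graph $G$, a function $f:V(G)\to\{0,1,2\}$ is a $(1,1,0)$-dominating function if $\sum_{u\in N(v)}f(u)\ge1$ for every vertex $v$ with $f(v)\in\{0,1\}$. For adjacent $v,u$ with $f(v)=0$, $f(u)>0$, $f_{u\to v}$ is defined by $f_{u\to v}(v)=1$, $f_{u\to v}(u)=f(u)-1$, $f_{u\to v}(x)=f(x)$ otherwise. $f$ is a secure $(1,1,0)$-dominating function if it is $(1,1,0)$-dominating and for every $v$ with $f(v)=0$ there is $u\in N(v)$ with $f(u)>0$ such that $f_{u\to v}$ is $(1,1,0)$-dominating. $\gamma_{(1,1,0)}^s(G)$ is the minimum of $\sum_v f(v)$ over secure $(1,1,0)$-dominating functions. *)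

theory Defs
  imports Complex_Main
begin

text \<open>A finite simple graph is given by a vertex set V and a symmetric irreflexive
adjacency relation E.\<close>

definition nbhd :: "'a set \<Rightarrow> ('a \<Rightarrow> 'a \<Rightarrow> bool) \<Rightarrow> 'a \<Rightarrow> 'a set" where
  "nbhd V E v = {u \<in> V. E v u}"

definition labelling :: "'a set \<Rightarrow> ('a \<Rightarrow> nat) \<Rightarrow> bool" where
  "labelling V f \<longleftrightarrow> (\<forall>v\<in>V. f v \<in> {0,1,2}) \<and> (\<forall>v. v \<notin> V \<longrightarrow> f v = 0)"

definition dom110 :: "'a set \<Rightarrow> ('a \<Rightarrow> 'a \<Rightarrow> bool) \<Rightarrow> ('a \<Rightarrow> nat) \<Rightarrow> bool" where
  "dom110 V E f \<longleftrightarrow> labelling V f \<and>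
     (\<forall>v\<in>V. f v \<in> {0,1} \<longrightarrow> (\<Sum>u\<in>nbhd V E v. f u) \<ge> 1)"

definition move :: "('a \<Rightarrow> nat) \<Rightarrow> 'a \<Rightarrow> 'a \<Rightarrow> ('a \<Rightarrow> nat)" where
  "move f u v = (\<lambda>x. if x = v then 1 else if x = u then f u - 1 else f x)"

definition secure_dom110 :: "'a set \<Rightarrow> ('a \<Rightarrow> 'a \<Rightarrow> bool) \<Rightarrow> ('a \<Rightarrow> nat) \<Rightarrow> bool" where
  "secure_dom110 V E f \<longleftrightarrow> dom110 V E f \<and>
     (\<forall>v\<in>V. f v = 0 \<longrightarrow> (\<exists>u\<in>nbhd V E v. f u > 0 \<and> dom110 V E (move f u v)))"

definition gamma_s110 :: "'a set \<Rightarrow> ('a \<Rightarrow> 'a \<Rightarrow> bool) \<Rightarrow> nat" where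
  "gamma_s110 V E = Min {(\<Sum>v\<in>V. f v) | f. secure_dom110 V E f}"

definition path_V :: "nat \<Rightarrow> nat set" where
  "path_V n = {0..<n}"

definition path_E :: "nat \<Rightarrow> nat \<Rightarrow> bool" where
  "path_E i j \<longleftrightarrow> i = j + 1 \<or> j = i + 1"

end

(* In any graph, a secure (1,1,0)-dominating function f gives every closed neighbourhood
   weight at least 2: if f v = 0 and the defender u of v moves one unit to v, then v carries 1
   and must still see positive weight, so the neighbours of v carried at least 2 before the move.
   On P_n this bounds the first pair, every three consecutive vertices and the last pair;
   tiling 0, ..., n - 1 by the first pair, triples and the last pair gives 2 ceil(n/3).
   Conversely, weight 2 on every third vertex dominates P_n when the residue class is chosen to
   cover both ends, and a dominating function without value 1 is automatically secure, because
   moving one unit away from a 2 leaves weight 1 on both endpoints of the move. *)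

theory Submission
  imports Defs
begin

lemma one_le_sum_nbhd_iff:
  fixes f :: "'a \<Rightarrow> nat"
  assumes "finite V"
  shows "1 \<le> (\<Sum>u\<in>nbhd V E v. f u) \<longleftrightarrow> (\<exists>u\<in>nbhd V E v. 0 < f u)"
proof -
  have "finite (nbhd V E v)" using assms by (simp add: nbhd_def)
  then have "(\<Sum>u\<in>nbhd V E v. f u) = 0 \<longleftrightarrow> (\<forall>u\<in>nbhd V E v. f u = 0)" by simp
  then show ?thesis by (auto simp: Suc_le_eq)
qed

lemma dom110_iff_positive_neighbour:
  assumes "finite V"
  shows "dom110 V E f \<longleftrightarrow>
    labelling V f \<and> (\<forall>v\<in>V. f v \<le> 1 \<longrightarrow> (\<exists>u\<in>nbhd V E v. 0 < f u))"
  unfolding dom110_def one_le_sum_nbhd_iff[OF assms] by auto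

lemma labelling_le_2: "labelling V f \<Longrightarrow> f v \<le> 2"
  unfolding labelling_def by (cases "v \<in> V") auto

lemma sum_move:
  assumes "finite A" "u \<in> A" "v \<notin> A" "0 < f u"
  shows "(\<Sum>x\<in>A. move f u v x) + 1 = (\<Sum>x\<in>A. f x)"
proof -
  have "u \<noteq> v" using assms by blast
  have "(\<Sum>x\<in>A - {u}. move f u v x) = (\<Sum>x\<in>A - {u}. f x)"
    using assms by (intro sum.cong) (auto simp: move_def)
  moreover have "move f u v u = f u - 1" using \<open>u \<noteq> v\<close> by (simp add: move_def)
  ultimately show ?thesis
    using assms by (simp add: sum.remove)
qed

lemma secure_dom110_closed_nbhd_weight:
  assumes "finite V" and irrefl: "\<And>x. \<not> E x x"
    and sec: "secure_dom110 V E f" and "v \<in> V"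
  shows "2 \<le> f v + (\<Sum>u\<in>nbhd V E v. f u)"
proof -
  have dom: "dom110 V E f" using sec by (simp add: secure_dom110_def)
  have fin: "finite (nbhd V E v)" using \<open>finite V\<close> by (simp add: nbhd_def)
  have "v \<notin> nbhd V E v" using irrefl by (simp add: nbhd_def)
  consider "f v = 0" | "f v = 1" | "f v = 2"
    using dom \<open>v \<in> V\<close> by (auto simp: dom110_def labelling_def)
  then show ?thesis
  proof cases
    case 1
    then obtain u where u: "u \<in> nbhd V E v" "0 < f u" and dom': "dom110 V E (move f u v)"
      using sec \<open>v \<in> V\<close> by (auto simp: secure_dom110_def)
    have "move f u v v = 1" by (simp add: move_def)
    then have "1 \<le> (\<Sum>x\<in>nbhd V E v. move f u v x)"
      using dom' \<open>v \<in> V\<close> by (simp add: dom110_def)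
    then show ?thesis
      using sum_move[of _ u v f, OF fin u(1) \<open>v \<notin> nbhd V E v\<close> u(2)] by simp
  next
    case 2
    then show ?thesis using dom \<open>v \<in> V\<close> by (simp add: dom110_def)
  qed simp
qed

lemma dom110_move_from_2:
  assumes "finite V" and dom: "dom110 V E f"
    and "u \<in> nbhd V E v" "v \<in> nbhd V E u" and "f u = 2"
  shows "dom110 V E (move f u v)"
proof -
  let ?g = "move f u v"
  have "u \<in> V" "v \<in> V" using assms(3,4) by (simp_all add: nbhd_def)
  have "labelling V ?g"
    using dom \<open>u \<in> V\<close> \<open>v \<in> V\<close> \<open>f u = 2\<close>
    by (auto simp: dom110_def labelling_def move_def)
  moreover have "\<exists>y\<in>nbhd V E x. 0 < ?g y" if "x \<in> V" "?g x \<le> 1" for x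
  proof -
    consider "x = v" | "x = u" | "x \<noteq> u" "x \<noteq> v" by blast
    then show ?thesis
    proof cases
      case 3
      then have "f x \<le> 1" using that by (simp add: move_def)
      then obtain y where "y \<in> nbhd V E x" "0 < f y"
        using dom \<open>x \<in> V\<close> by (auto simp: dom110_iff_positive_neighbour[OF \<open>finite V\<close>])
      moreover have "0 < ?g y" using \<open>0 < f y\<close> \<open>f u = 2\<close> by (simp add: move_def)
      ultimately show ?thesis by blast
    qed (use assms in \<open>auto simp: move_def\<close>)
  qed
  ultimately show ?thesis by (simp add: dom110_iff_positive_neighbour[OF \<open>finite V\<close>])
qed

lemma secure_dom110_if_no_value_1:
  assumes "finite V" and sym: "\<And>x y. E x y \<Longrightarrow> E y x"
    and dom: "dom110 V E f" and no_1: "\<And>x. f x \<noteq> 1"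
  shows "secure_dom110 V E f"
  unfolding secure_dom110_def
proof (intro conjI ballI impI dom)
  fix v assume "v \<in> V" "f v = 0"
  then obtain u where u: "u \<in> nbhd V E v" "0 < f u"
    using dom by (auto simp: dom110_iff_positive_neighbour[OF \<open>finite V\<close>])
  have "f u = 2"
    using u no_1[of u] labelling_le_2[of V f u] dom by (auto simp: dom110_def)
  moreover have "v \<in> nbhd V E u" using u \<open>v \<in> V\<close> sym by (auto simp: nbhd_def)
  ultimately show "\<exists>u\<in>nbhd V E v. 0 < f u \<and> dom110 V E (move f u v)"
    using u dom110_move_from_2[OF \<open>finite V\<close> dom] by blast
qed

lemma gamma_s110_eqI:
  assumes "finite V" and "secure_dom110 V E f" and "(\<Sum>v\<in>V. f v) = k"
    and "\<And>g. secure_dom110 V E g \<Longrightarrow> k \<le> (\<Sum>v\<in>V. g v)"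
  shows "gamma_s110 V E = k"
  unfolding gamma_s110_def
proof (rule Min_eqI)
  have "(\<Sum>v\<in>V. g v) \<le> 2 * card V" if "secure_dom110 V E g" for g
  proof -
    have "labelling V g" using that by (simp add: secure_dom110_def dom110_def)
    then have "(\<Sum>v\<in>V. g v) \<le> (\<Sum>v\<in>V. 2)" by (intro sum_mono labelling_le_2)
    then show ?thesis by simp
  qed
  then have "{(\<Sum>v\<in>V. g v) |g. secure_dom110 V E g} \<subseteq> {..2 * card V}" by auto
  then show "finite {(\<Sum>v\<in>V. g v) |g. secure_dom110 V E g}" by (rule finite_subset) simp
qed (use assms in auto)

lemma mem_nbhd_path:
  "u \<in> nbhd (path_V n) path_E v \<longleftrightarrow> u < n \<and> (u + 1 = v \<or> v + 1 = u)"
  by (auto simp: nbhd_def path_V_def path_E_def)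

lemma sum_nbhd_path:
  assumes "v < n"
  shows "(\<Sum>u\<in>nbhd (path_V n) path_E v. g u) =
    (if 0 < v then g (v - 1) else 0) + (if v + 1 < n then g (v + 1) else 0)"
proof -
  have "nbhd (path_V n) path_E v =
      (if 0 < v then {v - 1} else {}) \<union> (if v + 1 < n then {v + 1} else {})"
    using assms by (auto simp: mem_nbhd_path)
  then show ?thesis by (auto simp: add.commute)
qed

lemma secure_dom110_path_closed_nbhd:
  assumes "secure_dom110 (path_V n) path_E f" and "v < n"
  shows "2 \<le> (if 0 < v then f (v - 1) else 0) + f v + (if v + 1 < n then f (v + 1) else 0)"
proof -
  have "2 \<le> f v + (\<Sum>u\<in>nbhd (path_V n) path_E v. f u)"
    by (rule secure_dom110_closed_nbhd_weight[OF _ _ assms(1)])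
      (use assms(2) in \<open>auto simp: path_V_def path_E_def\<close>)
  then show ?thesis using assms(2) by (simp add: sum_nbhd_path)
qed

lemma secure_dom110_path_prefix_sum:
  assumes sec: "secure_dom110 (path_V n) path_E f"
  shows "m \<le> n \<Longrightarrow> 2 * ((m + 1) div 3) \<le> (\<Sum>i<m. f i)"
proof (induction m rule: less_induct)
  case (less m)
  consider "m < 2" | "m = 2" | "3 \<le> m" by linarith
  then show ?case
  proof cases
    case 2
    then show ?thesis
      using secure_dom110_path_closed_nbhd[OF sec, of 0] less.prems
      by (simp add: numeral_2_eq_2)
  next
    case 3
    define k where "k = m - 3"
    have m: "m = Suc (Suc (Suc k))" using 3 by (simp add: k_def)
    have "2 * ((k + 1) div 3) \<le> (\<Sum>i<k. f i)"
      using less.IH[of k] less.prems m by simp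
    moreover have "2 \<le> f k + f (Suc k) + f (Suc (Suc k))"
      using secure_dom110_path_closed_nbhd[OF sec, of "Suc k"] less.prems m by simp
    moreover have "(m + 1) div 3 = (k + 1) div 3 + 1" using m by simp
    ultimately show ?thesis using m by simp
  qed simp
qed

lemma secure_dom110_path_sum_ge:
  assumes sec: "secure_dom110 (path_V n) path_E f"
  shows "2 * ((n + 2) div 3) \<le> (\<Sum>i<n. f i)"
proof -
  consider "n = 0" | "n = 1" | "2 \<le> n" by linarith
  then show ?thesis
  proof cases
    case 2
    then show ?thesis using secure_dom110_path_closed_nbhd[OF sec, of 0] by simp
  next
    case 3
    define k where "k = n - 2"
    have n: "n = Suc (Suc k)" using 3 by (simp add: k_def)
    have "2 * ((k + 1) div 3) \<le> (\<Sum>i<k. f i)"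
      using secure_dom110_path_prefix_sum[OF sec, of k] n by simp
    moreover have "2 \<le> f k + f (Suc k)"
      using secure_dom110_path_closed_nbhd[OF sec, of "Suc k"] n by simp
    moreover have "(n + 2) div 3 = (k + 1) div 3 + 1" using n by simp
    ultimately show ?thesis using n by simp
  qed simp
qed

(* r = 0 puts weight on the last vertex n - 1 when n mod 3 = 1; otherwise r = 1 already
   dominates both ends. *)
definition witness_residue :: "nat \<Rightarrow> nat" where
  "witness_residue n = (if n mod 3 = 1 then 0 else 1)"

definition path_witness :: "nat \<Rightarrow> nat \<Rightarrow> nat" where
  "path_witness n i = (if i < n \<and> i mod 3 = witness_residue n then 2 else 0)"

lemma path_witness_dom110: "dom110 (path_V n) path_E (path_witness n)"
proof -
  have "finite (path_V n)" by (simp add: path_V_def)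
  moreover have "labelling (path_V n) (path_witness n)"
    by (simp add: labelling_def path_witness_def path_V_def)
  moreover have "\<exists>u\<in>nbhd (path_V n) path_E v. 0 < path_witness n u"
    if "v \<in> path_V n" "path_witness n v \<le> 1" for v
  proof -
    define r where "r = witness_residue n"
    have "v < n" using that by (simp add: path_V_def)
    have "v mod 3 \<noteq> r" using that \<open>v < n\<close> by (auto simp: path_witness_def r_def)
    moreover have "r \<le> 1" by (simp add: r_def witness_residue_def)
    ultimately have below: "(v + 1) mod 3 \<noteq> r \<Longrightarrow> 0 < v \<and> (v - 1) mod 3 = r"
      by (cases v) (auto simp: mod_Suc split: if_splits)
    have "\<exists>u<n. (u + 1 = v \<or> v + 1 = u) \<and> u mod 3 = r"
    proof (cases "(v + 1) mod 3 = r")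
      case True
      moreover have "v + 1 \<noteq> n \<or> (v + 1) mod 3 \<noteq> r" by (auto simp: r_def witness_residue_def)
      ultimately show ?thesis using \<open>v < n\<close> by (intro exI[of _ "v + 1"]) auto
    next
      case False
      then show ?thesis using below \<open>v < n\<close> by (intro exI[of _ "v - 1"]) auto
    qed
    then show ?thesis by (auto simp: mem_nbhd_path path_witness_def r_def)
  qed
  ultimately show ?thesis by (simp add: dom110_iff_positive_neighbour)
qed

lemma path_witness_secure_dom110: "secure_dom110 (path_V n) path_E (path_witness n)"
  by (rule secure_dom110_if_no_value_1[OF _ _ path_witness_dom110])
    (auto simp: path_V_def path_E_def path_witness_def)

lemma sum_residue_class_mod_3:
  fixes r m :: nat
  assumes "r < 3"
  shows "(\<Sum>i<m. if i mod 3 = r then 2 else 0) = 2 * ((m + 2 - r) div 3)"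
proof (induction m)
  case (Suc m)
  define q s where "q = m div 3" and "s = m mod 3"
  have "s \<in> {0, 1, 2}" "r \<in> {0, 1, 2}" using assms by (auto simp: s_def)
  moreover have "Suc m + 2 - r = s + 3 - r + 3 * q" "m + 2 - r = s + 2 - r + 3 * q"
    using assms by (simp_all add: q_def s_def)
  ultimately have "(Suc m + 2 - r) div 3 = (m + 2 - r) div 3 + (if m mod 3 = r then 1 else 0)"
    by (auto simp: s_def)
  then show ?case using Suc by simp
qed simp

lemma sum_path_witness: "(\<Sum>i<n. path_witness n i) = 2 * ((n + 2) div 3)"
proof -
  define r where "r = witness_residue n"
  have "(\<Sum>i<n. path_witness n i) = (\<Sum>i<n. if i mod 3 = r then 2 else 0)"
    by (simp add: path_witness_def r_def)
  also have "\<dots> = 2 * ((n + 2 - r) div 3)"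
    by (rule sum_residue_class_mod_3) (simp add: r_def witness_residue_def)
  also have "(n + 2 - r) div 3 = (n + 2) div 3"
    by (cases "n mod 3 = 1") (simp_all add: r_def witness_residue_def div_Suc mod_Suc)
  finally show ?thesis .
qed

lemma nat_ceiling_divide_3: "nat \<lceil>real n / 3\<rceil> = (n + 2) div 3"
proof -
  have "\<lceil>real n / 3\<rceil> = - (- int n div 3)"
    using ceiling_divide_eq_div[of "int n" 3] by simp
  also have "\<dots> = int ((n + 2) div 3)" by presburger
  finally show ?thesis by simp
qed

theorem proposition23:
  fixes n :: nat
  assumes "n \<ge> 4"
  shows "gamma_s110 (path_V n) path_E = 2 * nat \<lceil>real n / 3\<rceil>"
proof -
  have V: "path_V n = {..<n}" by (auto simp: path_V_def)
  have "gamma_s110 (path_V n) path_E = 2 * ((n + 2) div 3)"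
  proof (rule gamma_s110_eqI)
    show "finite (path_V n)" by (simp add: V)
    show "secure_dom110 (path_V n) path_E (path_witness n)" by (rule path_witness_secure_dom110)
    show "(\<Sum>i\<in>path_V n. path_witness n i) = 2 * ((n + 2) div 3)"
      using sum_path_witness by (simp add: V)
    show "2 * ((n + 2) div 3) \<le> (\<Sum>i\<in>path_V n. g i)" if "secure_dom110 (path_V n) path_E g" for g
      using secure_dom110_path_sum_ge[OF that] by (simp add: V)
  qed
  then show ?thesis by (simp add: nat_ceiling_divide_3)
qed

end
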